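(* Let $\mu$ be an admissible even Borel probability measure on $\mathbb{R}$. Then $\Lambda_\mu'$ is a strictly increasing surjection from $J=\{t:\Lambda_\mu(t)<\infty\}=(-t^{\ast},t^{\ast})$ onto $I=(-x^{\ast},x^{\ast})$. In particular, $\lim_{t\to\pm t^{\ast}}\Lambda_\mu'(t)=\pm x^{\ast}$.
   Context: Let $X$ have distribution $\mu$. Write $x^{\ast}=\sup\{x\in\mathbb{R}:\mu([x,\infty))>0\}$ (possibly $+\infty$), $I=(-x^{\ast},x^{\ast})$, $\Lambda_\mu(t)=\ln\int e^{tx}\,d\mu(x)$, $J=\{\Lambda_\mu<\infty\}$ and $t^{\ast}=\sup J$ (possibly $+\infty$). The measure $\mu$ is admissible if: $\mathrm{Var}(X)>0$; there is $r>0$ with $\mathbb{E}e^{tX}<\infty$ for $t\in(-r,r)$; if $x^{\ast}<\infty$ then $\mu(\{x^{\ast}\})=0$; and one of: (1) $x^{\ast}<\infty$, (2) $x^{\ast}=+\infty$ and $J=\mathbb{R}$, (3) $x^{\ast}=+\infty$, $J$ bounded and $\mu$ log-concave. For such $\mu$, $J$ is the open interval $(-t^{\ast},t^{\ast})$ and $\Lambda_\mu$ is $C^\infty$ on it. *)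

theory Defs
  imports "HOL-Probability.Probability"
begin

definition x_star :: "real measure \<Rightarrow> ereal" where
  "x_star M = Sup {ereal x | x. measure M {x..} > 0}"

definition Lambda :: "real measure \<Rightarrow> real \<Rightarrow> real" where
  "Lambda M t = ln (LINT x|M. exp (t * x))"

text \<open>J = {t. Lambda_mu(t) < oo}, i.e. e^(t x) is integrable.\<close>
definition J_set :: "real measure \<Rightarrow> real set" where
  "J_set M = {t. integrable M (\<lambda>x. exp (t * x))}"

definition t_star :: "real measure \<Rightarrow> ereal" where
  "t_star M = Sup (ereal ` J_set M)"

definition log_concave_measure :: "real measure \<Rightarrow> bool" where
  "log_concave_measure M \<longleftrightarrow>
     (\<forall>A B l. A \<in> sets borel \<longrightarrow> B \<in> sets borel \<longrightarrow> 0 < l \<longrightarrow> l < 1 \<longrightarrow>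
        {l * a + (1 - l) * b | a b. a \<in> A \<and> b \<in> B} \<in> sets borel \<longrightarrow>
        measure M {l * a + (1 - l) * b | a b. a \<in> A \<and> b \<in> B}
          \<ge> measure M A powr l * measure M B powr (1 - l))"

definition even_measure :: "real measure \<Rightarrow> bool" where
  "even_measure M \<longleftrightarrow> distr M borel uminus = M"

definition admissible :: "real measure \<Rightarrow> bool" where
  "admissible M \<longleftrightarrow>
     (LINT x|M. (x - (LINT y|M. y))\<^sup>2) > 0 \<and>
     (\<exists>r>0. \<forall>t. \<bar>t\<bar> < r \<longrightarrow> integrable M (\<lambda>x. exp (t * x))) \<and>
     (x_star M < \<infinity> \<longrightarrow> measure M {real_of_ereal (x_star M)} = 0) \<and>
     (x_star M < \<infinity> \<or>
      (x_star M = \<infinity> \<and> J_set M = UNIV) \<or>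
      (x_star M = \<infinity> \<and> bounded (J_set M) \<and> log_concave_measure M))"

end

theory Submission
  imports Defs
begin

text \<open>
  With m_k(t) = int x^k e^(t x) dmu we have Lambda = ln m_0, and differentiation under the
  integral sign gives Lambda' = m_1 / m_0 and Lambda'' = (m_2 m_0 - m_1^2) / m_0^2, the
  variance of mu tilted by e^(t x), which is positive because mu is not a point mass. So
  Lambda' is strictly increasing; it is odd because mu is even, and Lambda'(t) < x* because
  the tilted law lives on (-oo, x*), mu having no atom at x*.
  Admissibility makes J open. The only nontrivial case is x* = oo with J bounded: there
  log-concavity of y |-> mu[y, oo) turns e^(T y) mu[y, oo) -> 0 into a tail bound e^(-s y)
  with s > T, so J contains points beyond T.
  Convexity and Lambda(0) = 0 give Lambda'(t) >= Lambda(t) / t, which exceeds any a < x*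
  near t*: if t* = oo because Lambda(t) >= t a' + ln mu[a', oo) for a < a' < x*, and if t* is
  finite because Lambda blows up at t* by Fatou's lemma. Hence Lambda' -> x* at t*, and
  surjectivity onto (-x*, x*) follows from the intermediate value theorem.
\<close>

lemma exp_mult_le_exp_add_exp:
  fixes s u v x :: real
  assumes "s \<le> u" "u \<le> v"
  shows "exp (u * x) \<le> exp (s * x) + exp (v * x)"
proof (cases "0 \<le> x")
  case True
  then have "exp (u * x) \<le> exp (v * x)" using assms by (simp add: mult_right_mono)
  then show ?thesis by (smt (verit) exp_gt_zero)
next
  case False
  then have "exp (u * x) \<le> exp (s * x)" using assms by (simp add: mult_right_mono_neg)
  then show ?thesis by (smt (verit) exp_gt_zero)
qed

lemma exp_mult_exp_abs_le:
  fixes t d x :: real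
  shows "exp (t * x) * exp (d * \<bar>x\<bar>) \<le> exp ((t + d) * x) + exp ((t - d) * x)"
proof (cases "0 \<le> x")
  case True
  then have "exp (t * x) * exp (d * \<bar>x\<bar>) = exp ((t + d) * x)"
    by (simp add: exp_add[symmetric] algebra_simps)
  then show ?thesis by (smt (verit) exp_gt_zero)
next
  case False
  then have "exp (t * x) * exp (d * \<bar>x\<bar>) = exp ((t - d) * x)"
    by (simp add: exp_add[symmetric] algebra_simps)
  then show ?thesis by (smt (verit) exp_gt_zero)
qed

lemma pow_le_fact_mult_exp:
  fixes y :: real
  assumes "0 \<le> y"
  shows "y ^ k \<le> fact k * exp y"
proof -
  have "(\<lambda>n. y ^ n / fact n) sums exp y"
    using exp_converges[of y] by (simp add: divide_inverse mult.commute scaleR_conv_of_real)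
  then have "y ^ k / fact k \<le> exp y"
    using sum_le_suminf[of "\<lambda>n. y ^ n / fact n" "{k}"] assms by (auto simp: sums_iff)
  then show ?thesis by (simp add: divide_le_eq mult.commute)
qed

lemma abs_exp_sub_one_sub_le:
  fixes y :: real
  shows "\<bar>exp y - 1 - y\<bar> \<le> y\<^sup>2 * exp \<bar>y\<bar>"
proof -
  obtain s where s: "\<bar>s\<bar> \<le> \<bar>y\<bar>" "exp y = (\<Sum>m<2. y ^ m / fact m) + exp s / fact 2 * y ^ 2"
    using Maclaurin_exp_le[of y 2] by blast
  then have "\<bar>exp y - 1 - y\<bar> = exp s / 2 * y\<^sup>2"
    by (simp add: numeral_2_eq_2)
  also have "\<dots> \<le> exp \<bar>y\<bar> * y\<^sup>2"
  proof (rule mult_right_mono)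
    have "exp s \<le> exp \<bar>y\<bar>" using s(1) by simp
    then show "exp s / 2 \<le> exp \<bar>y\<bar>" using exp_gt_zero[of s] by linarith
  qed simp
  finally show ?thesis by (simp add: mult.commute)
qed

lemma abs_pow_exp_remainder_le:
  fixes h x c :: real
  assumes "\<bar>h\<bar> \<le> c"
  shows "\<bar>x ^ k * exp (t * x) * (exp (h * x) - 1 - h * x)\<bar>
    \<le> h\<^sup>2 * (\<bar>x\<bar> ^ (k + 2) * exp (t * x) * exp (c * \<bar>x\<bar>))"
proof -
  have "\<bar>exp (h * x) - 1 - h * x\<bar> \<le> (h * x)\<^sup>2 * exp \<bar>h * x\<bar>"
    by (rule abs_exp_sub_one_sub_le)
  also have "\<dots> \<le> (h * x)\<^sup>2 * exp (c * \<bar>x\<bar>)"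
    using mult_right_mono[OF assms, of "\<bar>x\<bar>"] by (intro mult_left_mono) (auto simp: abs_mult)
  finally have "\<bar>x ^ k * exp (t * x) * (exp (h * x) - 1 - h * x)\<bar>
      \<le> \<bar>x\<bar> ^ k * exp (t * x) * ((h * x)\<^sup>2 * exp (c * \<bar>x\<bar>))"
    by (auto simp: abs_mult power_abs intro: mult_left_mono)
  also have "\<dots> = h\<^sup>2 * (\<bar>x\<bar> ^ (k + 2) * exp (t * x) * exp (c * \<bar>x\<bar>))"
    by (simp add: power_add power_mult_distrib power2_eq_square mult_ac)
  finally show ?thesis .
qed

lemma exp_le_step_suminf:
  fixes u y0 x :: real
  assumes "0 < u"
  shows "ennreal (exp (u * x)) \<le> ennreal (exp (u * y0))
    + (\<Sum>k. ennreal (exp (u * (y0 + k + 1))) * indicator {y0 + k..} x)"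
proof (cases "x < y0")
  case True
  then have "ennreal (exp (u * x)) \<le> ennreal (exp (u * y0))"
    using assms by (simp add: ennreal_leI)
  then show ?thesis by (rule add_increasing2[rotated]) simp
next
  case False
  define f where "f k = ennreal (exp (u * (y0 + k + 1))) * indicator {y0 + k..} x" for k :: nat
  define k0 where "k0 = nat \<lfloor>x - y0\<rfloor>"
  have "y0 + k0 \<le> x" "x < y0 + k0 + 1"
    using False by (auto simp: k0_def) linarith+
  then have "ennreal (exp (u * x)) \<le> f k0"
    using assms by (simp add: f_def ennreal_leI)
  also have "\<dots> \<le> suminf f"
    using sum_le_suminf[of f "{k0}"] by simp
  finally show ?thesis
    unfolding f_def by (rule add_increasing[rotated]) simp
qed

lemma has_real_derivative_quadratic_remainder:
  fixes f :: "real \<Rightarrow> real"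
  assumes "0 < c" and remainder: "\<And>h. \<bar>h\<bar> < c \<Longrightarrow> \<bar>f (t + h) - f t - h * D\<bar> \<le> C * h\<^sup>2"
  shows "(f has_real_derivative D) (at t)"
  unfolding DERIV_def
proof (rule LIM_zero_cancel, rule Lim_null_comparison)
  have "\<forall>\<^sub>F h in at 0. \<bar>h\<bar> < c \<and> h \<noteq> 0"
    using \<open>0 < c\<close> by (auto simp: eventually_at intro!: exI[of _ c])
  then show "\<forall>\<^sub>F h in at 0. norm ((f (t + h) - f t) / h - D) \<le> C * \<bar>h\<bar>"
  proof eventually_elim
    case (elim h)
    have "norm ((f (t + h) - f t) / h - D) = \<bar>f (t + h) - f t - h * D\<bar> / \<bar>h\<bar>"
      using elim by (simp add: field_simps)
    also have "\<dots> \<le> C * h\<^sup>2 / \<bar>h\<bar>"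
      using elim remainder by (intro divide_right_mono) auto
    also have "\<dots> = C * \<bar>h\<bar>"
      using elim by (simp add: divide_simps power2_eq_square)
    finally show ?case .
  qed
  show "((\<lambda>h. C * \<bar>h\<bar>) \<longlongrightarrow> 0) (at 0)"
    by (intro tendsto_mult_right_zero tendsto_rabs_zero tendsto_ident_at)
qed

lemma ereal_uminus_less_iff: "ereal (- x) < y \<longleftrightarrow> - y < ereal x"
  by (metis ereal_uminus_less_reorder uminus_ereal.simps(1))

lemma convex_combination_Ici:
  fixes l y :: real
  assumes "0 < l" "l < 1"
  shows "{l * a + (1 - l) * b | a b. a \<in> {y..} \<and> b \<in> {0..}} = {l * y..}"
proof (intro equalityI subsetI)
  fix z assume "z \<in> {l * a + (1 - l) * b | a b. a \<in> {y..} \<and> b \<in> {0..}}"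
  then obtain a b where "z = l * a + (1 - l) * b" "y \<le> a" "0 \<le> b" by auto
  then show "z \<in> {l * y..}" using assms by (auto intro: add_increasing2 mult_left_mono)
next
  fix z assume "z \<in> {l * y..}"
  then have "z = l * (y + (z - l * y)) + (1 - l) * (z - l * y)" "0 \<le> z - l * y"
    by (auto simp: algebra_simps)
  then show "z \<in> {l * a + (1 - l) * b | a b. a \<in> {y..} \<and> b \<in> {0..}}" by force
qed

lemma (in prob_space) integral_pos_if_not_AE_zero:
  fixes f :: "'a \<Rightarrow> real"
  assumes "integrable M f" "AE x in M. 0 \<le> f x" "\<not> (AE x in M. f x = 0)"
  shows "0 < integral\<^sup>L M f"
  using integral_nonneg_eq_0_iff_AE[OF assms(1,2)] integral_nonneg_AE[OF assms(2)] assms(3)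
  by linarith

definition exp_moment :: "real measure \<Rightarrow> nat \<Rightarrow> real \<Rightarrow> real" where
  "exp_moment M k t = (LINT x|M. x ^ k * exp (t * x))"

context real_distribution
begin

lemma J_set_between:
  assumes "s \<in> J_set M" "v \<in> J_set M" "s \<le> u" "u \<le> v"
  shows "u \<in> J_set M"
proof -
  have "integrable M (\<lambda>x. exp (s * x) + exp (v * x))"
    using assms(1,2) by (simp add: J_set_def)
  then have "integrable M (\<lambda>x. exp (u * x))"
    by (rule Bochner_Integration.integrable_bound)
      (measurable, use exp_mult_le_exp_add_exp[OF assms(3,4)] in auto)
  then show ?thesis by (simp add: J_set_def)
qed

lemma zero_in_J_set: "0 \<in> J_set M"
  by (simp add: J_set_def)

lemma J_set_centre: "t - d \<in> J_set M \<Longrightarrow> t + d \<in> J_set M \<Longrightarrow> 0 < d \<Longrightarrow> t \<in> J_set M"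
  by (rule J_set_between[of "t - d" "t + d"]) auto

lemma integrable_abs_pow_exp_exp:
  assumes "t - d \<in> J_set M" "t + d \<in> J_set M" "0 \<le> c" "c < d"
  shows "integrable M (\<lambda>x. \<bar>x\<bar> ^ k * exp (t * x) * exp (c * \<bar>x\<bar>))"
proof -
  define K where "K = fact k / (d - c) ^ k"
  have "0 \<le> K" using assms(4) by (simp add: K_def)
  have bound: "\<bar>x\<bar> ^ k * exp (t * x) * exp (c * \<bar>x\<bar>)
      \<le> K * (exp ((t + d) * x) + exp ((t - d) * x))" for x
  proof -
    define E where "E = exp ((d - c) * \<bar>x\<bar>)"
    have "((d - c) * \<bar>x\<bar>) ^ k \<le> fact k * E"
      unfolding E_def using assms(4) by (intro pow_le_fact_mult_exp) simp
    then have "\<bar>x\<bar> ^ k * (d - c) ^ k \<le> fact k * E"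
      by (simp only: power_mult_distrib mult.commute)
    then have "\<bar>x\<bar> ^ k \<le> K * E"
      using assms(4) by (simp add: K_def field_simps)
    moreover have "E * exp (c * \<bar>x\<bar>) = exp (d * \<bar>x\<bar>)"
      unfolding E_def by (simp add: algebra_simps flip: exp_add)
    ultimately have "\<bar>x\<bar> ^ k * exp (c * \<bar>x\<bar>) \<le> K * exp (d * \<bar>x\<bar>)"
      by (metis exp_ge_zero mult.assoc mult_right_mono)
    then have "\<bar>x\<bar> ^ k * exp (t * x) * exp (c * \<bar>x\<bar>) \<le> K * (exp (t * x) * exp (d * \<bar>x\<bar>))"
      using mult_right_mono[of _ _ "exp (t * x)"] by (fastforce simp: mult_ac)
    also have "\<dots> \<le> K * (exp ((t + d) * x) + exp ((t - d) * x))"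
      using exp_mult_exp_abs_le \<open>0 \<le> K\<close> by (rule mult_left_mono)
    finally show ?thesis .
  qed
  have "integrable M (\<lambda>x. K * (exp ((t + d) * x) + exp ((t - d) * x)))"
    using assms(1,2) by (simp add: J_set_def)
  then show ?thesis
    by (rule Bochner_Integration.integrable_bound)
      (measurable, use bound \<open>0 \<le> K\<close> in \<open>auto intro: order.trans[OF _ bound]\<close>)
qed

lemma integrable_pow_exp:
  assumes "t - d \<in> J_set M" "t + d \<in> J_set M" "0 < d"
  shows "integrable M (\<lambda>x. x ^ k * exp (t * x))"
  using integrable_abs_pow_exp_exp[OF assms(1,2), of 0 k] assms(3)
  by (rule_tac Bochner_Integration.integrable_bound) (auto simp: abs_mult power_abs)

lemma exp_moment_remainder_bound:
  assumes "t - d \<in> J_set M" "t + d \<in> J_set M" "0 < d" "\<bar>h\<bar> < d / 2"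
  shows "\<bar>exp_moment M k (t + h) - exp_moment M k t - h * exp_moment M (Suc k) t\<bar>
    \<le> (LINT x|M. \<bar>x\<bar> ^ (k + 2) * exp (t * x) * exp (d / 2 * \<bar>x\<bar>)) * h\<^sup>2"
proof -
  define B where "B x = \<bar>x\<bar> ^ (k + 2) * exp (t * x) * exp (d / 2 * \<bar>x\<bar>)" for x
  define g where "g x = x ^ k * exp (t * x) * (exp (h * x) - 1 - h * x)" for x
  have "t + h - d / 2 \<in> J_set M" "t + h + d / 2 \<in> J_set M"
    using assms by (intro J_set_between[OF assms(1,2)]; simp)+
  then have "integrable M (\<lambda>x. x ^ k * exp ((t + h) * x))"
    using assms(3) by (intro integrable_pow_exp[of _ "d / 2"]) auto
  moreover have "integrable M (\<lambda>x. x ^ k * exp (t * x))"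
    and "integrable M (\<lambda>x. x ^ Suc k * exp (t * x))"
    by (rule integrable_pow_exp[OF assms(1-3)])+
  ultimately have "exp_moment M k (t + h) - exp_moment M k t - h * exp_moment M (Suc k) t
      = (LINT x|M. x ^ k * exp ((t + h) * x) - x ^ k * exp (t * x) - h * (x ^ Suc k * exp (t * x)))"
    by (simp add: exp_moment_def)
  also have "\<dots> = (LINT x|M. g x)"
    by (rule Bochner_Integration.integral_cong) (auto simp: g_def algebra_simps exp_add)
  finally have "\<bar>exp_moment M k (t + h) - exp_moment M k t - h * exp_moment M (Suc k) t\<bar>
      \<le> (LINT x|M. \<bar>g x\<bar>)"
    using integral_norm_bound[of M g] by simp
  also have "\<dots> \<le> (LINT x|M. h\<^sup>2 * B x)"
  proof (rule integral_mono')
    show "integrable M (\<lambda>x. h\<^sup>2 * B x)"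
      unfolding B_def using assms(1-3) by (intro integrable_mult_right integrable_abs_pow_exp_exp) auto
    show "0 \<le> h\<^sup>2 * B x" for x
      by (simp add: B_def)
    show "\<bar>g x\<bar> \<le> h\<^sup>2 * B x" for x
      unfolding B_def g_def using assms(4) by (intro abs_pow_exp_remainder_le) simp
  qed
  finally show ?thesis by (simp add: B_def mult.commute)
qed

lemma exp_moment_has_derivative:
  assumes "t - d \<in> J_set M" "t + d \<in> J_set M" "0 < d"
  shows "(exp_moment M k has_real_derivative exp_moment M (Suc k) t) (at t)"
  using assms exp_moment_remainder_bound[OF assms]
  by (intro has_real_derivative_quadratic_remainder[of "d / 2"]) auto

lemma exp_moment_0_pos:
  assumes "t \<in> J_set M"
  shows "0 < exp_moment M 0 t"
  using assms unfolding exp_moment_def J_set_def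
  by (intro integral_pos_if_not_AE_zero) auto

lemma Lambda_eq_ln_exp_moment: "Lambda M t = ln (exp_moment M 0 t)"
  by (simp add: Lambda_def exp_moment_def)

lemma Lambda_zero: "Lambda M 0 = 0"
  using prob_space by (simp add: Lambda_def)

lemma Lambda_has_derivative_moment_ratio:
  assumes "t - d \<in> J_set M" "t + d \<in> J_set M" "0 < d"
  shows "(Lambda M has_real_derivative exp_moment M 1 t / exp_moment M 0 t) (at t)"
  using exp_moment_has_derivative[OF assms, of 0] exp_moment_0_pos[OF J_set_centre[OF assms]]
  unfolding Lambda_eq_ln_exp_moment[abs_def]
  by (auto intro!: derivative_eq_intros)

lemma Lambda_ge:
  assumes "t \<in> J_set M" "0 \<le> t" "0 < measure M {a..}"
  shows "t * a + ln (measure M {a..}) \<le> Lambda M t"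
proof -
  have "measure M {a..} * exp (t * a) = (LINT x|M. indicator {a..} x * exp (t * a))"
    by simp
  also have "\<dots> \<le> (LINT x|M. exp (t * x))"
    using assms(1,2)
    by (intro integral_mono integrable_mult_left integrable_real_indicator)
       (auto simp: J_set_def indicator_def emeasure_eq_measure mult_left_mono)
  finally have "ln (measure M {a..} * exp (t * a)) \<le> Lambda M t"
    unfolding Lambda_def using assms(3) by (intro ln_mono) auto
  then show ?thesis using assms(3) by (simp add: ln_mult)
qed

lemma exp_moment_1_sq_less:
  assumes "t - d \<in> J_set M" "t + d \<in> J_set M" "0 < d"
    and nondegenerate: "\<And>c. \<not> (AE x in M. x = c)"
  shows "(exp_moment M 1 t)\<^sup>2 < exp_moment M 2 t * exp_moment M 0 t"
proof -
  define m where "m = exp_moment M 1 t / exp_moment M 0 t"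
  have m0: "0 < exp_moment M 0 t"
    using J_set_centre[OF assms(1-3)] by (rule exp_moment_0_pos)
  have expand: "(\<lambda>x. (x - m)\<^sup>2 * exp (t * x))
      = (\<lambda>x. x ^ 2 * exp (t * x) - 2 * m * (x ^ 1 * exp (t * x)) + m\<^sup>2 * (x ^ 0 * exp (t * x)))"
    by (auto simp: fun_eq_iff power2_eq_square algebra_simps)
  have int: "integrable M (\<lambda>x. x ^ k * exp (t * x))" for k
    using assms(1-3) by (rule integrable_pow_exp)
  have "integrable M (\<lambda>x. (x - m)\<^sup>2 * exp (t * x))"
    using int[of 0] int[of 1] int[of 2] unfolding expand by simp
  moreover have "\<not> (AE x in M. (x - m)\<^sup>2 * exp (t * x) = 0)"
    using nondegenerate[of m] by simp
  ultimately have "0 < (LINT x|M. (x - m)\<^sup>2 * exp (t * x))"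
    by (intro integral_pos_if_not_AE_zero) auto
  also have "(LINT x|M. (x - m)\<^sup>2 * exp (t * x))
      = exp_moment M 2 t - 2 * m * exp_moment M 1 t + m\<^sup>2 * exp_moment M 0 t"
    using int[of 0] int[of 1] int[of 2] unfolding expand by (simp add: exp_moment_def)
  also have "exp_moment M 2 t - 2 * m * exp_moment M 1 t + m\<^sup>2 * exp_moment M 0 t
      = (exp_moment M 2 t * exp_moment M 0 t - (exp_moment M 1 t)\<^sup>2) / exp_moment M 0 t"
    using m0 by (simp add: m_def field_simps power2_eq_square)
  finally show ?thesis
    using m0 by (simp add: zero_less_divide_iff)
qed

lemma not_AE_eq_const_if_variance_pos:
  assumes "0 < (LINT x|M. (x - (LINT y|M. y))\<^sup>2)"
  shows "\<not> (AE x in M. x = c)"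
proof
  assume const: "AE x in M. x = c"
  then have "(LINT y|M. y) = c"
    using integral_cong_AE[of "\<lambda>y. y" M "\<lambda>_. c"] prob_space by simp
  then have "(LINT x|M. (x - (LINT y|M. y))\<^sup>2) = (LINT x|M. 0)"
    using const by (intro integral_cong_AE) auto
  then show False using assms by simp
qed

lemma measure_Ici_eq_0_if_x_star_less:
  assumes "x_star M < ereal y"
  shows "measure M {y..} = 0"
proof (rule ccontr)
  assume "measure M {y..} \<noteq> 0"
  then have "0 < measure M {y..}"
    using measure_nonneg[of M "{y..}"] by linarith
  then have "ereal y \<le> x_star M"
    unfolding x_star_def by (auto intro!: Sup_upper)
  then show False using assms by simp
qed

lemma measure_Ici_pos_if_less_x_star:
  assumes "ereal y < x_star M"
  shows "0 < measure M {y..}"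
proof -
  obtain z where "ereal y < ereal z" "0 < measure M {z..}"
    using assms unfolding x_star_def less_Sup_iff by blast
  moreover have "measure M {z..} \<le> measure M {y..}"
    using \<open>ereal y < ereal z\<close> by (intro finite_measure_mono) auto
  ultimately show ?thesis by simp
qed

lemma AE_le_x_star: "AE x in M. ereal x \<le> x_star M"
proof -
  have "AE x in M. \<forall>q\<in>\<rat>. x_star M < ereal q \<longrightarrow> x < q"
  proof (subst AE_ball_countable[OF countable_rat], intro ballI)
    fix q :: real
    show "AE x in M. x_star M < ereal q \<longrightarrow> x < q"
    proof (cases "x_star M < ereal q")
      case True
      then have "{q..} \<in> null_sets M"
        by (intro null_setsI) (simp_all add: emeasure_eq_measure measure_Ici_eq_0_if_x_star_less)
      from AE_not_in[OF this] show ?thesis by (auto elim: eventually_mono)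
    qed simp
  qed
  then show ?thesis
  proof (rule eventually_mono)
    fix x assume elim: "\<forall>q\<in>\<rat>. x_star M < ereal q \<longrightarrow> x < q"
    show "ereal x \<le> x_star M"
    proof (rule ccontr)
      assume "\<not> ereal x \<le> x_star M"
      then obtain z where z: "x_star M < ereal z" "ereal z < ereal x"
        using ereal_dense2 not_le by meson
      then obtain q where q: "q \<in> \<rat>" "z < q" "q < x"
        using Rats_dense_in_real[of z x] by auto
      then have "x_star M < ereal q"
        using z(1) by (simp add: order.strict_trans)
      then show False using elim q by auto
    qed
  qed
qed

lemma x_star_neq_MInfty: "x_star M \<noteq> -\<infinity>"
  using AE_le_x_star by auto

lemma AE_less_x_star:
  assumes "x_star M < \<infinity> \<Longrightarrow> measure M {real_of_ereal (x_star M)} = 0"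
  shows "AE x in M. ereal x < x_star M"
proof (cases "x_star M = \<infinity>")
  case False
  then obtain c where c: "x_star M = ereal c"
    using x_star_neq_MInfty by (cases "x_star M") auto
  then have "{c} \<in> null_sets M"
    using assms by (intro null_setsI) (simp_all add: emeasure_eq_measure)
  then have "AE x in M. x \<notin> {c}"
    by (rule AE_not_in)
  with AE_le_x_star show ?thesis
    by eventually_elim (auto simp: c)
qed simp

lemma nonneg_in_J_set_if_x_star_finite:
  assumes "x_star M < \<infinity>" "0 \<le> t"
  shows "t \<in> J_set M"
proof -
  obtain c where c: "x_star M = ereal c"
    using assms(1) x_star_neq_MInfty by (cases "x_star M") auto
  have "integrable M (\<lambda>x. exp (t * x))"
  proof (rule Bochner_Integration.integrable_bound)
    show "integrable M (\<lambda>x. exp (t * c))" by simp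
    show "AE x in M. norm (exp (t * x)) \<le> norm (exp (t * c))"
      using AE_le_x_star by eventually_elim (use assms(2) in \<open>auto simp: c mult_left_mono\<close>)
  qed measurable
  then show ?thesis by (simp add: J_set_def)
qed

lemma exp_moment_ratio_less_x_star:
  assumes "t - d \<in> J_set M" "t + d \<in> J_set M" "0 < d"
    and below: "AE x in M. ereal x < x_star M"
  shows "ereal (exp_moment M 1 t / exp_moment M 0 t) < x_star M"
proof (cases "x_star M = \<infinity>")
  case False
  then obtain c where c: "x_star M = ereal c"
    using x_star_neq_MInfty by (cases "x_star M") auto
  have below_c: "AE x in M. x < c" using below by (simp add: c)
  have int: "integrable M (\<lambda>x. x ^ k * exp (t * x))" for k
    using assms(1-3) by (rule integrable_pow_exp)
  have expand: "(\<lambda>x. (c - x) * exp (t * x)) = (\<lambda>x. c * (x ^ 0 * exp (t * x)) - x ^ 1 * exp (t * x))"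
    by (auto simp: fun_eq_iff algebra_simps)
  have "integrable M (\<lambda>x. (c - x) * exp (t * x))"
    using int[of 0] int[of 1] unfolding expand by simp
  moreover have "\<not> (AE x in M. (c - x) * exp (t * x) = 0)"
  proof
    assume "AE x in M. (c - x) * exp (t * x) = 0"
    with below_c have "AE x in M. False" by eventually_elim simp
    then show False by simp
  qed
  ultimately have "0 < (LINT x|M. (c - x) * exp (t * x))"
    using below_c by (intro integral_pos_if_not_AE_zero) (auto elim!: eventually_mono)
  also have "(LINT x|M. (c - x) * exp (t * x)) = c * exp_moment M 0 t - exp_moment M 1 t"
    using int[of 0] int[of 1] unfolding expand by (simp add: exp_moment_def)
  finally show ?thesis
    using exp_moment_0_pos[OF J_set_centre[OF assms(1-3)]]
    by (simp add: c divide_less_eq mult.commute)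
qed simp

lemma exp_mult_measure_Ici_tendsto_0:
  assumes "T \<in> J_set M" "0 < T"
  shows "(\<lambda>n::nat. exp (T * real n) * measure M {real n..}) \<longlonglongrightarrow> 0"
proof (rule tendsto_sandwich[OF _ _ tendsto_const])
  have int: "integrable M (\<lambda>x. exp (T * x))" using assms(1) by (simp add: J_set_def)
  have int_tail: "integrable M (\<lambda>x. indicator {real n..} x * exp (T * x))" for n
    using int by (rule Bochner_Integration.integrable_bound) (auto simp: indicator_def)
  show "\<forall>\<^sub>F n in sequentially. exp (T * real n) * measure M {real n..}
      \<le> (LINT x|M. indicator {real n..} x * exp (T * x))"
  proof (intro always_eventually allI)
    fix n :: nat
    have "exp (T * real n) * measure M {real n..} = (LINT x|M. indicator {real n..} x * exp (T * real n))"
      by (simp add: mult.commute)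
    also have "\<dots> \<le> (LINT x|M. indicator {real n..} x * exp (T * x))"
      using assms(2) int_tail
      by (intro integral_mono integrable_mult_left integrable_real_indicator)
         (auto simp: indicator_def emeasure_eq_measure)
    finally show "exp (T * real n) * measure M {real n..}
        \<le> (LINT x|M. indicator {real n..} x * exp (T * x))" .
  qed
  have "(\<lambda>n. LINT x|M. indicator {real n..} x * exp (T * x)) \<longlonglongrightarrow> (LINT x|M. 0)"
  proof (rule integral_dominated_convergence[OF _ _ int])
    show "AE x in M. (\<lambda>n. indicator {real n..} x * exp (T * x)) \<longlonglongrightarrow> 0"
    proof (intro AE_I2 tendsto_eventually)
      fix x :: real
      obtain N :: nat where "x < real N" using reals_Archimedean2 by blast
      then show "\<forall>\<^sub>F n in sequentially. indicator {real n..} x * exp (T * x) = 0"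
        unfolding eventually_sequentially by (intro exI[of _ N]) (auto simp: indicator_def)
    qed
  qed (auto simp: indicator_def)
  then show "(\<lambda>n. LINT x|M. indicator {real n..} x * exp (T * x)) \<longlonglongrightarrow> 0"
    by simp
qed auto

lemma in_J_set_if_exp_tail_bound:
  assumes "0 < u" "u < s" "0 \<le> y0"
    and tail: "\<And>y. y0 \<le> y \<Longrightarrow> measure M {y..} \<le> exp (- s * y)"
  shows "u \<in> J_set M"
proof -
  define h where "h k x = ennreal (exp (u * (y0 + k + 1))) * indicator {y0 + k..} x" for k :: nat and x
  define c where "c = ennreal (exp (u * y0))"
  define b where "b k = exp (u + (u - s) * y0) * exp (u - s) ^ k" for k :: nat
  have h_le_b: "(\<integral>\<^sup>+ x. h k x \<partial>M) \<le> ennreal (b k)" for k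
  proof -
    have "(\<integral>\<^sup>+ x. h k x \<partial>M) = ennreal (exp (u * (y0 + k + 1)) * measure M {y0 + k..})"
      unfolding h_def by (simp add: nn_integral_cmult_indicator emeasure_eq_measure ennreal_mult'')
    also have "\<dots> \<le> ennreal (exp (u * (y0 + k + 1)) * exp (- s * (y0 + k)))"
      using tail[of "y0 + k"] by (intro ennreal_leI mult_left_mono) auto
    also have "exp (u * (y0 + k + 1)) * exp (- s * (y0 + k)) = b k"
      by (simp add: b_def exp_of_nat_mult[symmetric] algebra_simps flip: exp_add)
    finally show ?thesis .
  qed
  have "(\<integral>\<^sup>+ x. ennreal (exp (u * x)) \<partial>M) \<le> (\<integral>\<^sup>+ x. c + (\<Sum>k. h k x) \<partial>M)"
    unfolding c_def h_def using assms(1) by (intro nn_integral_mono exp_le_step_suminf)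
  also have "\<dots> = c + (\<Sum>k. \<integral>\<^sup>+ x. h k x \<partial>M)"
    using emeasure_space_1 by (simp add: nn_integral_add nn_integral_suminf h_def)
  also have "\<dots> \<le> c + (\<Sum>k. ennreal (b k))"
    by (intro add_left_mono suminf_le h_le_b) auto
  also have "\<dots> < \<top>"
    using assms(1,2) by (simp add: b_def c_def suminf_ennreal2 summable_geometric)
  finally have "integrable M (\<lambda>x. exp (u * x))"
    by (intro integrableI_bounded) auto
  then show ?thesis by (simp add: J_set_def)
qed

lemma log_concave_ln_tail_le:
  assumes "log_concave_measure M" "x_star M = \<infinity>" "0 < y0" "y0 \<le> y"
  shows "ln (measure M {y..})
    \<le> ln (measure M {0..}) + y / y0 * (ln (measure M {y0..}) - ln (measure M {0..}))"
proof (cases "y = y0")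
  case False
  define G where "G z = measure M {z..}" for z
  have G_pos: "0 < G z" for z
    using assms(2) measure_Ici_pos_if_less_x_star by (simp add: G_def)
  define l where "l = y0 / y"
  have l: "0 < l" "l < 1" "l * y = y0"
    using assms(3,4) False by (auto simp: l_def field_simps)
  have combination: "{l * a + (1 - l) * b | a b. a \<in> {y..} \<and> b \<in> {0..}} = {y0..}"
    using convex_combination_Ici[OF l(1,2), of y] l(3) by simp
  have "G y powr l * G 0 powr (1 - l) \<le> G y0"
    using assms(1)[unfolded log_concave_measure_def, rule_format, of "{y..}" "{0..}" l] l(1,2)
    unfolding combination by (simp add: G_def)
  then have "ln (G y powr l * G 0 powr (1 - l)) \<le> ln (G y0)"
    using G_pos[of y] G_pos[of 0] by (intro ln_mono) auto
  then have "l * ln (G y) + (1 - l) * ln (G 0) \<le> ln (G y0)"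
    using G_pos[of y] G_pos[of 0] by (simp add: ln_mult)
  then have "ln (G y) \<le> ln (G 0) + (ln (G y0) - ln (G 0)) / l"
    using l(1) by (simp add: field_simps)
  then show ?thesis
    using assms(3,4) by (simp add: G_def l_def mult.commute)
qed simp

lemma J_set_extends_if_log_concave:
  assumes "log_concave_measure M" "x_star M = \<infinity>" "T \<in> J_set M" "0 < T"
  shows "\<exists>u\<in>J_set M. T < u"
proof -
  define G where "G z = measure M {z..}" for z
  have G_pos: "0 < G z" for z
    using assms(2) measure_Ici_pos_if_less_x_star by (simp add: G_def)
  have "\<forall>\<^sub>F n in sequentially. exp (T * real n) * G (real n) < G 0 \<and> 1 \<le> n"
    using order_tendstoD(2)[OF exp_mult_measure_Ici_tendsto_0[OF assms(3,4)] G_pos[of 0]]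
      eventually_ge_at_top[of 1]
    by (auto simp: G_def intro: eventually_conj)
  then obtain N :: nat where N: "exp (T * real N) * G (real N) < G 0" "1 \<le> N"
    using eventually_sequentially by auto
  define y0 where "y0 = real N"
  define s where "s = (ln (G 0) - ln (G y0)) / y0"
  have "y0 \<ge> 1" using N(2) by (simp add: y0_def)
  have "ln (exp (T * y0) * G y0) < ln (G 0)"
    using N(1) G_pos by (simp add: y0_def)
  then have "T < s"
    using G_pos[of y0] \<open>y0 \<ge> 1\<close> by (simp add: s_def ln_mult field_simps)
  have tail: "G y \<le> exp (- s * y)" if "y0 \<le> y" for y
  proof -
    have "ln (G y) \<le> ln (G 0) + y / y0 * (ln (G y0) - ln (G 0))"
      using log_concave_ln_tail_le[OF assms(1,2)] \<open>y0 \<ge> 1\<close> that by (simp add: G_def)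
    also have "\<dots> = ln (G 0) - s * y"
      using \<open>y0 \<ge> 1\<close> by (simp add: s_def field_simps)
    also have "\<dots> \<le> - s * y"
      using G_pos[of 0] prob_le_1[of "{0..}"] by (simp add: G_def)
    finally show ?thesis
      using G_pos[of y] by (metis exp_le_cancel_iff exp_ln)
  qed
  have "(T + s) / 2 \<in> J_set M"
    using assms(4) \<open>T < s\<close> \<open>y0 \<ge> 1\<close> tail
    by (intro in_J_set_if_exp_tail_bound[of _ s y0]) (auto simp: G_def)
  moreover have "T < (T + s) / 2" using \<open>T < s\<close> by simp
  ultimately show ?thesis by blast
qed

lemma in_J_set_if_exp_moment_bounded:
  assumes "s \<longlonglongrightarrow> T" "\<And>n. s n \<in> J_set M" "\<And>n. exp_moment M 0 (s n) \<le> C"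
  shows "T \<in> J_set M"
proof -
  have conv: "(\<lambda>n. ennreal (exp (s n * x))) \<longlonglongrightarrow> ennreal (exp (T * x))" for x
    using assms(1) by (intro tendsto_ennrealI tendsto_intros)
  have "(\<integral>\<^sup>+ x. ennreal (exp (T * x)) \<partial>M)
      = (\<integral>\<^sup>+ x. liminf (\<lambda>n. ennreal (exp (s n * x))) \<partial>M)"
    by (intro nn_integral_cong lim_imp_Liminf[symmetric] conv) simp
  also have "\<dots> \<le> liminf (\<lambda>n. \<integral>\<^sup>+ x. ennreal (exp (s n * x)) \<partial>M)"
    by (rule nn_integral_liminf) measurable
  also have "\<dots> \<le> ennreal C"
  proof (rule Liminf_le)
    show "\<forall>\<^sub>F n in sequentially. (\<integral>\<^sup>+ x. ennreal (exp (s n * x)) \<partial>M) \<le> ennreal C"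
    proof (intro always_eventually allI)
      fix n
      have "(\<integral>\<^sup>+ x. ennreal (exp (s n * x)) \<partial>M) = ennreal (exp_moment M 0 (s n))"
        using assms(2)[of n] unfolding exp_moment_def J_set_def power_0 mult_1
        by (intro nn_integral_eq_integral) auto
      then show "(\<integral>\<^sup>+ x. ennreal (exp (s n * x)) \<partial>M) \<le> ennreal C"
        using assms(3)[of n] by (simp add: ennreal_leI)
    qed
  qed simp
  also have "\<dots> < \<top>" by simp
  finally have "integrable M (\<lambda>x. exp (T * x))"
    by (intro integrableI_bounded) auto
  then show ?thesis by (simp add: J_set_def)
qed

lemma Lambda_unbounded_below_boundary:
  assumes "T \<notin> J_set M" "{0..<T} \<subseteq> J_set M" "0 < T"
  shows "\<exists>t\<in>{0..<T}. B < Lambda M t"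
proof (rule ccontr)
  assume bounded_Lambda: "\<not> ?thesis"
  define s where "s n = T - T / (2 + real n)" for n :: nat
  have s: "s n \<in> {0..<T}" for n
    using assms(3) by (auto simp: s_def field_simps)
  have "s \<longlonglongrightarrow> T - 0"
    unfolding s_def
    by (intro tendsto_diff tendsto_const real_tendsto_divide_at_top[OF tendsto_const]
        filterlim_tendsto_add_at_top[OF tendsto_const filterlim_real_sequentially])
  then have lim: "s \<longlonglongrightarrow> T" by simp
  have bound: "exp_moment M 0 (s n) \<le> exp B" for n
  proof -
    have "ln (exp_moment M 0 (s n)) \<le> B"
      using bounded_Lambda s[of n] by (auto simp: Lambda_eq_ln_exp_moment not_less)
    then show ?thesis
      using exp_moment_0_pos[of "s n"] s[of n] assms(2) by (metis exp_le_cancel_iff exp_ln subsetD)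
  qed
  have "s n \<in> J_set M" for n
    using s assms(2) by auto
  then show False
    using in_J_set_if_exp_moment_bounded[OF lim _ bound] assms(1) by blast
qed

end

locale even_real_distribution = real_distribution +
  assumes even: "even_measure M"
begin

lemma integral_reflect:
  fixes f :: "real \<Rightarrow> real"
  assumes "f \<in> borel_measurable borel"
  shows "integrable M (\<lambda>x. f (- x)) \<longleftrightarrow> integrable M f"
    and "(LINT x|M. f (- x)) = (LINT x|M. f x)"
proof -
  have reflect: "(uminus :: real \<Rightarrow> real) \<in> M \<rightarrow>\<^sub>M borel"
    by measurable
  have "distr M borel uminus = M"
    using even by (simp add: even_measure_def)
  then show "integrable M (\<lambda>x. f (- x)) \<longleftrightarrow> integrable M f"
    and "(LINT x|M. f (- x)) = (LINT x|M. f x)"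
    using integrable_distr_eq[OF reflect assms] integral_distr[OF reflect assms] by simp_all
qed

lemma J_set_uminus:
  assumes "t \<in> J_set M"
  shows "- t \<in> J_set M"
proof -
  have "integrable M (\<lambda>x. (\<lambda>x. exp (- t * x)) (- x)) \<longleftrightarrow> integrable M (\<lambda>x. exp (- t * x))"
    by (rule integral_reflect(1)) measurable
  then show ?thesis using assms by (simp add: J_set_def)
qed

lemma exp_moment_uminus: "exp_moment M k (- t) = (- 1) ^ k * exp_moment M k t"
proof -
  have "exp_moment M k (- t) = (LINT x|M. (- (- x)) ^ k * exp (t * (- x)))"
    by (simp only: exp_moment_def minus_minus mult_minus_left mult_minus_right)
  also have "\<dots> = (LINT x|M. (- x) ^ k * exp (t * x))"
    by (rule integral_reflect(2)[of "\<lambda>y. (- y) ^ k * exp (t * y)"]) measurable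
  also have "\<dots> = (LINT x|M. (- 1) ^ k * (x ^ k * exp (t * x)))"
    by (intro Bochner_Integration.integral_cong refl) (subst power_minus, rule mult.assoc)
  finally show ?thesis
    by (simp only: exp_moment_def integral_mult_right_zero)
qed

lemma open_J_set_if_no_max:
  assumes no_max: "\<And>t. t \<in> J_set M \<Longrightarrow> \<exists>u\<in>J_set M. t < u"
  shows "open (J_set M)"
  unfolding open_subopen[of "J_set M"]
proof
  fix t assume "t \<in> J_set M"
  obtain u where u: "u \<in> J_set M" "t < u"
    using no_max[OF \<open>t \<in> J_set M\<close>] by blast
  obtain v where v: "v \<in> J_set M" "- t < v"
    using no_max[OF J_set_uminus[OF \<open>t \<in> J_set M\<close>]] by blast
  have "{- v<..<u} \<subseteq> J_set M"
    using J_set_between[OF J_set_uminus[OF v(1)] u(1)] by auto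
  then show "\<exists>T. open T \<and> t \<in> T \<and> T \<subseteq> J_set M"
    using u(2) v(2) by (intro exI[of _ "{- v<..<u}"]) auto
qed

lemma J_set_eq_UNIV_if_x_star_finite:
  assumes "x_star M < \<infinity>"
  shows "J_set M = UNIV"
proof -
  have "t \<in> J_set M" for t
  proof (cases "0 \<le> t")
    case False
    then have "- t \<in> J_set M" using assms by (intro nonneg_in_J_set_if_x_star_finite) auto
    then show ?thesis using J_set_uminus by fastforce
  qed (use assms nonneg_in_J_set_if_x_star_finite in auto)
  then show ?thesis by auto
qed

lemma open_J_set_if_admissible:
  assumes "admissible M"
  shows "open (J_set M)"
proof (rule open_J_set_if_no_max)
  fix t assume "t \<in> J_set M"
  obtain r where r: "0 < r" "\<forall>t. \<bar>t\<bar> < r \<longrightarrow> integrable M (\<lambda>x. exp (t * x))"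
    using assms unfolding admissible_def by blast
  then have "r / 2 \<in> J_set M"
    unfolding J_set_def by (auto dest: spec[of _ "r / 2"])
  consider "J_set M = UNIV" | "x_star M = \<infinity>" "log_concave_measure M"
    using assms J_set_eq_UNIV_if_x_star_finite unfolding admissible_def by blast
  then show "\<exists>u\<in>J_set M. t < u"
  proof cases
    case 1
    then show ?thesis by (intro bexI[of _ "t + 1"]) auto
  next
    case 2
    show ?thesis
    proof (cases "0 < t")
      case True
      then show ?thesis using J_set_extends_if_log_concave[OF 2(2,1) \<open>t \<in> J_set M\<close>] by blast
    next
      case False
      then show ?thesis using \<open>r / 2 \<in> J_set M\<close> \<open>0 < r\<close> by (intro bexI[of _ "r / 2"]) auto
    qed
  qed
qed

end

locale even_regular_distribution = even_real_distribution +
  assumes open_J_set: "open (J_set M)"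
    and nondegenerate: "\<And>c. \<not> (AE x in M. x = c)"
    and no_atom_at_x_star: "x_star M < \<infinity> \<Longrightarrow> measure M {real_of_ereal (x_star M)} = 0"
begin

lemma J_set_nbhd:
  assumes "t \<in> J_set M"
  obtains d where "0 < d" "t - d \<in> J_set M" "t + d \<in> J_set M"
proof -
  obtain e where e: "0 < e" "ball t e \<subseteq> J_set M"
    using openE[OF open_J_set assms] by blast
  then show ?thesis
    by (intro that[of "e / 2"]) (auto intro!: subsetD[OF e(2)] simp: dist_real_def)
qed

lemma J_set_eq: "J_set M = {t. - t_star M < ereal t \<and> ereal t < t_star M}"
proof (intro equalityI subsetI)
  have less_t_star: "ereal t < t_star M" if t: "t \<in> J_set M" for t
  proof -
    obtain d where "0 < d" "t + d \<in> J_set M"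
      using J_set_nbhd[OF t] by blast
    then have "ereal t < ereal (t + d)" "ereal (t + d) \<le> t_star M"
      unfolding t_star_def by (auto intro: Sup_upper)
    then show ?thesis by (rule order.strict_trans2)
  qed
  fix t assume "t \<in> J_set M"
  then have "ereal t < t_star M" "ereal (- t) < t_star M"
    using less_t_star J_set_uminus by auto
  then show "t \<in> {t. - t_star M < ereal t \<and> ereal t < t_star M}"
    by (simp add: ereal_uminus_less_iff)
next
  fix t assume "t \<in> {t. - t_star M < ereal t \<and> ereal t < t_star M}"
  then have "ereal t < Sup (ereal ` J_set M)" "ereal (- t) < Sup (ereal ` J_set M)"
    by (auto simp: t_star_def ereal_uminus_less_iff)
  then obtain u v where "u \<in> J_set M" "t < u" "v \<in> J_set M" "- t < v"
    unfolding less_Sup_iff by auto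
  then show "t \<in> J_set M"
    using J_set_between[OF J_set_uminus[of v]] by auto
qed

lemma deriv_Lambda_eq:
  assumes "t \<in> J_set M"
  shows "deriv (Lambda M) t = exp_moment M 1 t / exp_moment M 0 t"
  using J_set_nbhd[OF assms] Lambda_has_derivative_moment_ratio DERIV_imp_deriv by metis

lemma Lambda_has_deriv:
  assumes "t \<in> J_set M"
  shows "(Lambda M has_real_derivative deriv (Lambda M) t) (at t)"
  using J_set_nbhd[OF assms] Lambda_has_derivative_moment_ratio deriv_Lambda_eq[OF assms] by metis

lemma deriv_Lambda_has_pos_derivative:
  assumes "t \<in> J_set M"
  shows "\<exists>D. (deriv (Lambda M) has_real_derivative D) (at t) \<and> 0 < D"
proof -
  obtain d where d: "0 < d" "t - d \<in> J_set M" "t + d \<in> J_set M"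
    using J_set_nbhd[OF assms] by blast
  let ?m = "exp_moment M"
  have m0: "0 < ?m 0 t" using assms by (rule exp_moment_0_pos)
  have "((\<lambda>s. ?m 1 s / ?m 0 s) has_real_derivative
      (?m 2 t * ?m 0 t - ?m 1 t * ?m 1 t) / (?m 0 t * ?m 0 t)) (at t)"
    using DERIV_divide[OF exp_moment_has_derivative[OF d(2,3,1), of 1]
        exp_moment_has_derivative[OF d(2,3,1), of 0]] m0
    by (simp add: numeral_2_eq_2)
  then have "(deriv (Lambda M) has_real_derivative
      (?m 2 t * ?m 0 t - ?m 1 t * ?m 1 t) / (?m 0 t * ?m 0 t)) (at t)"
    by (rule has_field_derivative_transform_within_open[OF _ open_J_set assms])
       (simp add: deriv_Lambda_eq)
  moreover have "0 < (?m 2 t * ?m 0 t - ?m 1 t * ?m 1 t) / (?m 0 t * ?m 0 t)"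
    using exp_moment_1_sq_less[OF d(2,3,1) nondegenerate] m0 by (simp add: power2_eq_square)
  ultimately show ?thesis by blast
qed

lemma strict_mono_on_deriv_Lambda: "strict_mono_on (J_set M) (deriv (Lambda M))"
proof (rule strict_mono_onI)
  fix s u assume "s \<in> J_set M" "u \<in> J_set M" "s < u"
  show "deriv (Lambda M) s < deriv (Lambda M) u"
  proof (rule DERIV_pos_imp_increasing[OF \<open>s < u\<close>])
    fix x assume "s \<le> x" "x \<le> u"
    then show "\<exists>D. (deriv (Lambda M) has_real_derivative D) (at x) \<and> 0 < D"
      by (intro deriv_Lambda_has_pos_derivative J_set_between[OF \<open>s \<in> J_set M\<close> \<open>u \<in> J_set M\<close>])
  qed
qed

lemma continuous_on_deriv_Lambda: "continuous_on (J_set M) (deriv (Lambda M))"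
  by (intro continuous_at_imp_continuous_on ballI)
     (metis deriv_Lambda_has_pos_derivative DERIV_isCont)

lemma deriv_Lambda_uminus:
  assumes "t \<in> J_set M"
  shows "deriv (Lambda M) (- t) = - deriv (Lambda M) t"
  using deriv_Lambda_eq[OF assms] deriv_Lambda_eq[OF J_set_uminus[OF assms]]
    exp_moment_uminus[of 1 t] exp_moment_uminus[of 0 t]
  by simp

lemma deriv_Lambda_nonneg:
  assumes "t \<in> J_set M" "0 \<le> t"
  shows "0 \<le> deriv (Lambda M) t"
proof -
  have "deriv (Lambda M) 0 = 0"
    using deriv_Lambda_uminus[OF zero_in_J_set] by simp
  moreover have "deriv (Lambda M) 0 \<le> deriv (Lambda M) t"
    using strict_mono_onD[OF strict_mono_on_deriv_Lambda zero_in_J_set assms(1)] assms(2)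
    by (cases "t = 0") auto
  ultimately show ?thesis by simp
qed

lemma deriv_Lambda_less_x_star:
  assumes "t \<in> J_set M"
  shows "ereal (deriv (Lambda M) t) < x_star M"
proof -
  obtain d where "0 < d" "t - d \<in> J_set M" "t + d \<in> J_set M"
    using J_set_nbhd[OF assms] by blast
  then show ?thesis
    using exp_moment_ratio_less_x_star AE_less_x_star[OF no_atom_at_x_star]
    by (simp add: deriv_Lambda_eq[OF assms])
qed

lemma uminus_x_star_less_deriv_Lambda:
  assumes "t \<in> J_set M"
  shows "- x_star M < ereal (deriv (Lambda M) t)"
  using deriv_Lambda_less_x_star[OF J_set_uminus[OF assms]]
  by (simp add: deriv_Lambda_uminus[OF assms] ereal_uminus_less_iff)

lemma Lambda_le_mult_deriv:
  assumes "t \<in> J_set M" "0 < t"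
  shows "Lambda M t \<le> t * deriv (Lambda M) t"
proof -
  have "\<exists>z. 0 < z \<and> z < t \<and> Lambda M t - Lambda M 0 = (t - 0) * deriv (Lambda M) z"
  proof (rule MVT2[OF \<open>0 < t\<close>])
    fix x assume "0 \<le> x" "x \<le> t"
    then show "(Lambda M has_real_derivative deriv (Lambda M) x) (at x)"
      by (intro Lambda_has_deriv J_set_between[OF zero_in_J_set assms(1)])
  qed
  then obtain z where z: "0 < z" "z < t" "Lambda M t = t * deriv (Lambda M) z"
    by (auto simp: Lambda_zero)
  have "deriv (Lambda M) z < deriv (Lambda M) t"
    using z J_set_between[OF zero_in_J_set assms(1), of z] assms(1)
    by (intro strict_mono_onD[OF strict_mono_on_deriv_Lambda]) auto
  then show ?thesis using z assms(2) by simp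
qed

lemma Lambda_mono_nonneg:
  assumes "t \<in> J_set M" "0 \<le> s" "s \<le> t"
  shows "Lambda M s \<le> Lambda M t"
proof (rule DERIV_nonneg_imp_nondecreasing[OF \<open>s \<le> t\<close>])
  fix x assume "s \<le> x" "x \<le> t"
  then have "x \<in> J_set M" "0 \<le> x"
    using J_set_between[OF zero_in_J_set assms(1)] assms(2) by auto
  then show "\<exists>y. (Lambda M has_real_derivative y) (at x) \<and> 0 \<le> y"
    using Lambda_has_deriv deriv_Lambda_nonneg by blast
qed

abbreviation towards_t_star :: "real filter" where
  "towards_t_star \<equiv> if t_star M = \<infinity> then at_top else at_left (real_of_ereal (t_star M))"

lemma J_set_eq_UNIV_if_t_star_infinite: "t_star M = \<infinity> \<Longrightarrow> J_set M = UNIV"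
  using J_set_eq by auto

lemma t_star_finiteE:
  assumes "t_star M \<noteq> \<infinity>"
  obtains T where "0 < T" "t_star M = ereal T" "J_set M = {- T<..<T}"
proof -
  have "ereal 0 < t_star M"
    using zero_in_J_set unfolding J_set_eq by simp
  then obtain T where T: "t_star M = ereal T" "0 < T"
    using assms by (cases "t_star M") auto
  moreover have "J_set M = {- T<..<T}"
    unfolding J_set_eq T(1) by auto
  ultimately show ?thesis using that by blast
qed

lemma eventually_in_J_set: "eventually (\<lambda>t. t \<in> J_set M) towards_t_star"
proof (cases "t_star M = \<infinity>")
  case False
  then obtain T where "0 < T" "t_star M = ereal T" "J_set M = {- T<..<T}"
    by (rule t_star_finiteE)
  moreover have "eventually (\<lambda>t. t \<in> {- T<..<T}) (at_left T)"
    using \<open>0 < T\<close> by (intro eventually_at_left_real) simp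
  ultimately show ?thesis by simp
qed (simp add: J_set_eq_UNIV_if_t_star_infinite)

lemma eventually_at_top_deriv_Lambda_gt:
  assumes "J_set M = UNIV" "ereal a < x_star M"
  shows "eventually (\<lambda>t. a < deriv (Lambda M) t) at_top"
proof -
  obtain b where "a < b" "ereal b < x_star M"
    using ereal_dense2[OF assms(2)] by force
  define p where "p = measure M {b..}"
  have "0 < p"
    using \<open>ereal b < x_star M\<close> measure_Ici_pos_if_less_x_star by (simp add: p_def)
  have "eventually (\<lambda>t. 0 < t \<and> - ln p / (b - a) < t) at_top"
    by (intro eventually_conj eventually_gt_at_top)
  then show ?thesis
  proof eventually_elim
    case (elim t)
    then have "- ln p < t * (b - a)"
      using \<open>a < b\<close> pos_divide_less_eq[of "b - a" "- ln p" t] by simp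
    then have "t * a < t * b + ln p"
      by (simp add: right_diff_distrib)
    also have "\<dots> \<le> Lambda M t"
      using Lambda_ge[of t b] assms(1) elim \<open>0 < p\<close> by (simp add: p_def)
    also have "\<dots> \<le> t * deriv (Lambda M) t"
      using Lambda_le_mult_deriv assms(1) elim by simp
    finally show ?case using elim by simp
  qed
qed

lemma eventually_at_left_deriv_Lambda_gt:
  assumes "0 < T" "J_set M = {- T<..<T}"
  shows "eventually (\<lambda>t. a < deriv (Lambda M) t) (at_left T)"
proof -
  have "T \<notin> J_set M" "{0..<T} \<subseteq> J_set M"
    unfolding assms(2) using assms(1) by auto
  then obtain t0 where t0: "t0 \<in> {0..<T}" "\<bar>a\<bar> * T < Lambda M t0"
    using Lambda_unbounded_below_boundary[OF _ _ assms(1), of "\<bar>a\<bar> * T"] by blast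
  have "eventually (\<lambda>t. t \<in> {t0<..<T}) (at_left T)"
    using t0(1) by (intro eventually_at_left_real) simp
  then show ?thesis
  proof eventually_elim
    case (elim t)
    then have t: "t \<in> J_set M" "0 < t"
      using t0(1) unfolding assms(2) by auto
    have "\<bar>a\<bar> * T < Lambda M t"
      using t0 Lambda_mono_nonneg[OF t(1), of t0] elim by auto
    also have "\<dots> \<le> t * deriv (Lambda M) t"
      using t by (rule Lambda_le_mult_deriv)
    finally have "\<bar>a\<bar> * T < t * deriv (Lambda M) t" .
    moreover have "\<bar>a\<bar> * t \<le> \<bar>a\<bar> * T" using elim by (intro mult_left_mono) auto
    ultimately have "t * \<bar>a\<bar> < t * deriv (Lambda M) t" by (simp add: mult.commute)
    then have "\<bar>a\<bar> < deriv (Lambda M) t" using t(2) by simp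
    then show ?case by linarith
  qed
qed

lemma eventually_deriv_Lambda_gt:
  assumes "ereal a < x_star M"
  shows "eventually (\<lambda>t. a < deriv (Lambda M) t) towards_t_star"
proof (cases "t_star M = \<infinity>")
  case True
  then show ?thesis
    using eventually_at_top_deriv_Lambda_gt[OF J_set_eq_UNIV_if_t_star_infinite assms] by simp
next
  case False
  then obtain T where T: "0 < T" "t_star M = ereal T" "J_set M = {- T<..<T}"
    by (rule t_star_finiteE)
  show ?thesis
    using eventually_at_left_deriv_Lambda_gt[OF T(1,3)] T(2) by simp
qed

lemma exists_deriv_Lambda_gt:
  assumes "ereal a < x_star M"
  obtains t where "t \<in> J_set M" "a < deriv (Lambda M) t"
proof -
  have "eventually (\<lambda>t. t \<in> J_set M \<and> a < deriv (Lambda M) t) towards_t_star"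
    using eventually_in_J_set eventually_deriv_Lambda_gt[OF assms] by (rule eventually_conj)
  moreover have "towards_t_star \<noteq> bot" by simp
  ultimately show ?thesis using eventually_happens' that by blast
qed

lemma tendsto_deriv_Lambda_x_star:
  "((\<lambda>t. ereal (deriv (Lambda M) t)) \<longlongrightarrow> x_star M) towards_t_star"
  unfolding order_tendsto_iff
proof safe
  fix l assume "l < x_star M"
  then obtain z where z: "l < ereal z" "ereal z < x_star M"
    using ereal_dense2 by blast
  show "eventually (\<lambda>t. l < ereal (deriv (Lambda M) t)) towards_t_star"
    using eventually_deriv_Lambda_gt[OF z(2)]
    by (rule eventually_mono) (use z(1) in \<open>auto intro: order.strict_trans\<close>)
next
  fix u assume "x_star M < u"
  show "eventually (\<lambda>t. ereal (deriv (Lambda M) t) < u) towards_t_star"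
    using eventually_in_J_set
    by (rule eventually_mono) (use \<open>x_star M < u\<close> deriv_Lambda_less_x_star in \<open>auto intro: order.strict_trans\<close>)
qed

lemma tendsto_deriv_Lambda_uminus_x_star:
  "((\<lambda>t. ereal (deriv (Lambda M) t)) \<longlongrightarrow> - x_star M)
     (if t_star M = \<infinity> then at_bot else at_right (- real_of_ereal (t_star M)))"
proof -
  have mirror: "(if t_star M = \<infinity> then at_bot else at_right (- real_of_ereal (t_star M)))
      = filtermap uminus towards_t_star"
    by (simp add: at_bot_mirror at_right_minus)
  have "((\<lambda>t. - ereal (deriv (Lambda M) t)) \<longlongrightarrow> - x_star M) towards_t_star"
    by (intro tendsto_uminus_ereal tendsto_deriv_Lambda_x_star)
  moreover have "eventually (\<lambda>t. - ereal (deriv (Lambda M) t) = ereal (deriv (Lambda M) (- t)))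
      towards_t_star"
    using eventually_in_J_set by (rule eventually_mono) (simp add: deriv_Lambda_uminus)
  ultimately have "((\<lambda>t. ereal (deriv (Lambda M) (- t))) \<longlongrightarrow> - x_star M) towards_t_star"
    by (rule Lim_transform_eventually)
  then show ?thesis
    unfolding mirror tendsto_compose_filtermap[symmetric] by (simp add: comp_def)
qed

lemma deriv_Lambda_image:
  "deriv (Lambda M) ` J_set M = {x. - x_star M < ereal x \<and> ereal x < x_star M}"
proof (intro equalityI subsetI)
  fix y assume "y \<in> deriv (Lambda M) ` J_set M"
  then show "y \<in> {x. - x_star M < ereal x \<and> ereal x < x_star M}"
    using deriv_Lambda_less_x_star uminus_x_star_less_deriv_Lambda by auto
next
  fix y assume "y \<in> {x. - x_star M < ereal x \<and> ereal x < x_star M}"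
  then have "ereal y < x_star M" "ereal (- y) < x_star M"
    by (auto simp: ereal_uminus_less_iff)
  then obtain t1 t2 where t1: "t1 \<in> J_set M" "y < deriv (Lambda M) t1"
    and t2: "t2 \<in> J_set M" "- y < deriv (Lambda M) t2"
    using exists_deriv_Lambda_gt by metis
  then have t0: "- t2 \<in> J_set M" "deriv (Lambda M) (- t2) < y"
    using J_set_uminus deriv_Lambda_uminus by auto
  have "- t2 \<le> t1"
  proof (rule ccontr)
    assume "\<not> - t2 \<le> t1"
    then have "deriv (Lambda M) t1 < deriv (Lambda M) (- t2)"
      using strict_mono_onD[OF strict_mono_on_deriv_Lambda t1(1) t0(1)] by simp
    then show False using t0 t1 by simp
  qed
  moreover have "{- t2..t1} \<subseteq> J_set M"
    using J_set_between[OF t0(1) t1(1)] by auto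
  ultimately obtain x where "x \<in> {- t2..t1}" "deriv (Lambda M) x = y"
    using IVT'[of "deriv (Lambda M)" "- t2" y t1] t0 t1
      continuous_on_subset[OF continuous_on_deriv_Lambda] by force
  then show "y \<in> deriv (Lambda M) ` J_set M"
    using \<open>{- t2..t1} \<subseteq> J_set M\<close> by force
qed

end

theorem lemma2p3:
  fixes M :: "real measure"
  assumes "prob_space M" and "sets M = sets borel"
    and "even_measure M" and "admissible M"
  shows "J_set M = {t. - t_star M < ereal t \<and> ereal t < t_star M} \<and>
           strict_mono_on (J_set M) (deriv (Lambda M)) \<and>
           deriv (Lambda M) ` J_set M = {x. - x_star M < ereal x \<and> ereal x < x_star M} \<and>
           ((\<lambda>t. ereal (deriv (Lambda M) t)) \<longlongrightarrow> x_star M)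
           (if t_star M = \<infinity> then at_top else at_left (real_of_ereal (t_star M))) \<and>
           ((\<lambda>t. ereal (deriv (Lambda M) t)) \<longlongrightarrow> - x_star M)
           (if t_star M = \<infinity> then at_bot else at_right (- real_of_ereal (t_star M)))"
proof -
  interpret even_real_distribution M
    using assms(1-3)
    by (simp add: even_real_distribution_def even_real_distribution_axioms_def
        real_distribution_def real_distribution_axioms_def)
  interpret even_regular_distribution M
  proof
    show "open (J_set M)"
      using assms(4) by (rule open_J_set_if_admissible)
    show "\<not> (AE x in M. x = c)" for c
      using assms(4) not_AE_eq_const_if_variance_pos by (simp add: admissible_def)
    show "measure M {real_of_ereal (x_star M)} = 0" if "x_star M < \<infinity>"
      using assms(4) that by (simp add: admissible_def)
  qed
  show ?thesis
    by (intro conjI J_set_eq strict_mono_on_deriv_Lambda deriv_Lambda_image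
        tendsto_deriv_Lambda_x_star tendsto_deriv_Lambda_uminus_x_star)
qed

end
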